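(* Let $\rho$ be a nonlinearity, $V_{\mathrm{in}}$ a nonempty finite set and $D\in\mathbb{N}$. The binary relation of $\rho$-isomorphism is an equivalence relation on both $\mathscr{N}^{V_{\mathrm{in}},D}_{\mathrm{G}}$ and $\mathscr{N}^{V_{\mathrm{in}},D}_{\mathrm{L}}$, and if $\mathcal{N}$ is $\rho$-isomorphic to $\mathcal{M}$, then $R_{\mathcal{N}}=R_{\mathcal{M}}$.
   Context: A nonlinearity is a continuous $\rho:\mathbb{R}\to\mathbb{R}$ not of the form $t\mapsto at+b$. GFNN with $D$-dim output: $\mathcal{N}=(V,E,V_{\mathrm{in}},V_{\mathrm{out}},\Omega,\Theta,\Lambda)$, $(V,E)$ finite loopless DAG, $V_{\mathrm{in}}$ the parentless nodes, $V_{\mathrm{out}}\subset V\setminus V_{\mathrm{in}}$, nonzero real weights $\omega_{\tilde vv}$ on edges $(v,\tilde v)$, real biases on non-input nodes, real output scalars $\lambda^{(r)},\lambda^{(r)}_w$. $\mathrm{anc}(S)$: nodes with a directed path (length $\ge0$) into $S$. $\mathrm{lv}=0$ on parentless nodes, else $1+$max of parents; LFNN: $\mathrm{lv}(\tilde v)=\mathrm{lv}(v)+1$ on edges. $R_u(t)=t_u$ on inputs, $R_u(t)=\rho(\sum_{v\in\mathrm{par}(u)}\omega_{uv}R_v(t)+\theta_u)$; $R_{\mathcal{N}}=(\lambda^{(r)}+\sum_w\lambda^{(r)}_wR_w)_r$. Non-degenerate: $V\setminus V_{\mathrm{in}}\subset\mathrm{anc}(V_{\mathrm{out}})$ and each output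 node has some nonzero $\lambda^{(r)}_w$. Affine symmetry: $(\zeta,\{(\alpha_s,\beta_s,\gamma_s)\}_{s\in\mathcal{I}})$, $\mathcal{I}$ nonempty finite, $\sum_s\alpha_s\rho(\beta_st+\gamma_s)=\zeta$ $\forall t$, no proper $\mathcal{I}'$ with $\{\rho(\beta_s\cdot+\gamma_s)\}_{\mathcal{I}'}\cup\{\mathbf1\}$ linearly dependent. Reducible: some nonempty $U$ with common parent set $P$, nonzero $\kappa_v,\beta_u$ with $\omega_{uv}=\beta_u\kappa_v$, and $\zeta$, nonzero $\alpha_u$ making $(\zeta,\{(\alpha_u,\beta_u,\theta_u)\}_{u\in U})$ an affine symmetry. Regular = irreducible + non-degenerate. $\mathscr{N}^{V_{\mathrm{in}},D}_{\mathrm{G}}$ ($\mathscr{N}^{V_{\mathrm{in}},D}_{\mathrm{L}}$) = regular GFNNs (LFNNs) with $D$-dim output and input set $V_{\mathrm{in}}$. $\rho$-modification of an irreducible $\mathcal{N}$: $A,B\subset V\setminus V_{\mathrm{in}}$ disjoint, $A\ne\varnothing$, common parent set $P$, $W=\{w:\mathrm{par}(w)\cap A\ne\varnothing\}$; (i) affine symmetry $(\zeta,\{(\alpha_u,\beta_u,\theta_u)\}_{u\in A\cup B}\cup\{(\alpha'_p,\beta'_p,\gamma'_p)\}_{p=1}^n)$, $n\ge1$; (ii) nonzero $\kappa_v$ with $\omega_{uv}=\beta_u\kappa_v$; (iii) $A\subset\mathrm{par}(w)$, nonzero $\nu_w$ with $\omega_{wu}=\nu_w\alpha_u$ ($w\in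 W,u\in A$); (iv) $A\cap V_{\mathrm{out}}=\varnothing$ or $A\subset V_{\mathrm{out}}$ with reals $\mu_r$, $\lambda^{(r)}_u=\mu_r\alpha_u$ ($u\in A$). Delete $A$ and incident edges; add $C=\{u'_1,\dots,u'_n\}$ with edges $(v,u'_p)$ of weight $\beta'_p\kappa_v$, bias $\gamma'_p$, edges $(u'_p,w)$ of weight $-\alpha'_p\nu_w$; $\theta_w\mapsto\theta_w+\zeta\nu_w$; for $w\in W,u\in B$ add edge of weight $-\alpha_u\nu_w$ if absent, else $\omega_{wu}\mapsto\omega_{wu}-\alpha_u\nu_w$, deleting it if $0$. If $A\subset V_{\mathrm{out}}$: $\lambda^{(r)}\mapsto\lambda^{(r)}+\zeta\mu_r$, $\lambda^{(r)}_{u'_p}=-\alpha'_p\mu_r$, for $u\in B$ $\lambda^{(r)}_u$ ($0$ if $u\notin V_{\mathrm{out}}$) $\mapsto\lambda^{(r)}_u-\alpha_u\mu_r$, output set $(V_{\mathrm{out}}\setminus(A\cup B))\cup C\cup\{u\in B:\text{some new }\lambda^{(r)}_u\ne0\}$; else outputs unchanged. Regular GFNNs $\mathcal{N},\mathcal{M}$ (same $D$, same inputs) are $\rho$-isomorphic if there are regular GFNNs $\mathcal{N}_1=\mathcal{N},\dots,\mathcal{N}_n=\mathcal{M}$ ($n\ge1$) with $D$-dim output and the same input set, each $\mathcal{N}_{j+1}$ a $\rho$-modification of $\mathcal{N}_j$. *)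

theory Defs
  imports Complex_Main
begin

definition nonlinearity :: "(real \<Rightarrow> real) \<Rightarrow> bool" where
  "nonlinearity \<rho> \<longleftrightarrow> continuous_on UNIV \<rho> \<and> \<not> (\<exists>a b. \<forall>t. \<rho> t = a * t + b)"

text \<open>An edge (v, u) goes from v to u and carries the
weight  weight N u v  (the paper's omega_{uv}).  Output scalars: outc N r is lambda^(r),
outw N r w is lambda^(r)_w (r = 0..D-1).\<close>

record 'v net =
  nodes   :: "'v set"
  edges   :: "('v \<times> 'v) set"
  inputs  :: "'v set"
  outputs :: "'v set"
  weight  :: "'v \<Rightarrow> 'v \<Rightarrow> real"
  bias    :: "'v \<Rightarrow> real"
  outc    :: "nat \<Rightarrow> real"
  outw    :: "nat \<Rightarrow> 'v \<Rightarrow> real"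

definition par :: "'v net \<Rightarrow> 'v \<Rightarrow> 'v set" where
  "par N u = {v. (v, u) \<in> edges N}"

definition gfnn :: "nat \<Rightarrow> 'v net \<Rightarrow> bool" where
  "gfnn D N \<longleftrightarrow>
     finite (nodes N) \<and> edges N \<subseteq> nodes N \<times> nodes N \<and> acyclic (edges N) \<and>
     inputs N = {v \<in> nodes N. par N v = {}} \<and>
     outputs N \<subseteq> nodes N - inputs N \<and>
     (\<forall>(v, u) \<in> edges N. weight N u v \<noteq> 0) \<and>
     (\<forall>u v. (v, u) \<notin> edges N \<longrightarrow> weight N u v = 0) \<and>
     (\<forall>u. u \<notin> nodes N - inputs N \<longrightarrow> bias N u = 0) \<and>
     (\<forall>r. D \<le> r \<longrightarrow> outc N r = 0) \<and>
     (\<forall>r u. D \<le> r \<or> u \<notin> outputs N \<longrightarrow> outw N r u = 0)"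

text \<open>Levels, computed with fuel (the number of nodes suffices in a DAG).\<close>

fun lv_fuel :: "'v net \<Rightarrow> nat \<Rightarrow> 'v \<Rightarrow> nat" where
  "lv_fuel N 0 u = 0"
| "lv_fuel N (Suc k) u =
     (if par N u = {} then 0 else Suc (Max (lv_fuel N k ` par N u)))"

definition level :: "'v net \<Rightarrow> 'v \<Rightarrow> nat" where
  "level N u = lv_fuel N (card (nodes N)) u"

definition lfnn :: "nat \<Rightarrow> 'v net \<Rightarrow> bool" where
  "lfnn D N \<longleftrightarrow> gfnn D N \<and> (\<forall>(v, u) \<in> edges N. level N u = Suc (level N v))"

fun R_fuel :: "(real \<Rightarrow> real) \<Rightarrow> 'v net \<Rightarrow> nat \<Rightarrow> 'v \<Rightarrow> ('v \<Rightarrow> real) \<Rightarrow> real" where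
  "R_fuel \<rho> N 0 u t = t u"
| "R_fuel \<rho> N (Suc k) u t =
     (if u \<in> inputs N then t u
      else \<rho> ((\<Sum>v\<in>par N u. weight N u v * R_fuel \<rho> N k v t) + bias N u))"

definition node_real :: "(real \<Rightarrow> real) \<Rightarrow> 'v net \<Rightarrow> 'v \<Rightarrow> ('v \<Rightarrow> real) \<Rightarrow> real" where
  "node_real \<rho> N u t = R_fuel \<rho> N (card (nodes N)) u t"

text \<open>R_N(t)_r, for r < D (r is 0-based).\<close>
definition realization :: "(real \<Rightarrow> real) \<Rightarrow> 'v net \<Rightarrow> ('v \<Rightarrow> real) \<Rightarrow> nat \<Rightarrow> real" where
  "realization \<rho> N t r = outc N r + (\<Sum>w\<in>outputs N. outw N r w * node_real \<rho> N w t)"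

definition ancestors :: "'v net \<Rightarrow> 'v set \<Rightarrow> 'v set" where
  "ancestors N S = {v. \<exists>u\<in>S. (v, u) \<in> (edges N)\<^sup>*}"

definition nondegenerate :: "nat \<Rightarrow> 'v net \<Rightarrow> bool" where
  "nondegenerate D N \<longleftrightarrow>
     nodes N - inputs N \<subseteq> ancestors N (outputs N) \<and>
     (\<forall>w\<in>outputs N. \<exists>r<D. outw N r w \<noteq> 0)"

definition lin_dep_with_one ::
  "(real \<Rightarrow> real) \<Rightarrow> 'i set \<Rightarrow> ('i \<Rightarrow> real) \<Rightarrow> ('i \<Rightarrow> real) \<Rightarrow> bool" where
  "lin_dep_with_one \<rho> J \<beta> \<gamma> \<longleftrightarrow>
     (\<exists>c0 c. (c0 \<noteq> 0 \<or> (\<exists>s\<in>J. c s \<noteq> 0)) \<and>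
            (\<forall>t. c0 + (\<Sum>s\<in>J. c s * \<rho> (\<beta> s * t + \<gamma> s)) = 0))"

definition affine_symmetry ::
  "(real \<Rightarrow> real) \<Rightarrow> 'i set \<Rightarrow> real \<Rightarrow> ('i \<Rightarrow> real) \<Rightarrow> ('i \<Rightarrow> real) \<Rightarrow> ('i \<Rightarrow> real) \<Rightarrow> bool" where
  "affine_symmetry \<rho> I \<zeta> \<alpha> \<beta> \<gamma> \<longleftrightarrow>
     finite I \<and> I \<noteq> {} \<and>
     (\<forall>t. (\<Sum>s\<in>I. \<alpha> s * \<rho> (\<beta> s * t + \<gamma> s)) = \<zeta>) \<and>
     \<not> (\<exists>J. J \<subset> I \<and> lin_dep_with_one \<rho> J \<beta> \<gamma>)"

definition reducible :: "(real \<Rightarrow> real) \<Rightarrow> 'v net \<Rightarrow> bool" where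
  "reducible \<rho> N \<longleftrightarrow>
     (\<exists>U P \<kappa> \<beta> \<zeta> \<alpha>. U \<noteq> {} \<and> U \<subseteq> nodes N - inputs N \<and>
        (\<forall>u\<in>U. par N u = P) \<and>
        (\<forall>v\<in>P. \<kappa> v \<noteq> 0) \<and> (\<forall>u\<in>U. \<beta> u \<noteq> 0 \<and> \<alpha> u \<noteq> 0) \<and>
        (\<forall>u\<in>U. \<forall>v\<in>P. weight N u v = \<beta> u * \<kappa> v) \<and>
        affine_symmetry \<rho> U \<zeta> \<alpha> \<beta> (bias N))"

definition regular :: "(real \<Rightarrow> real) \<Rightarrow> nat \<Rightarrow> 'v net \<Rightarrow> bool" where
  "regular \<rho> D N \<longleftrightarrow> gfnn D N \<and> \<not> reducible \<rho> N \<and> nondegenerate D N"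

definition regular_GFNNs :: "(real \<Rightarrow> real) \<Rightarrow> 'v set \<Rightarrow> nat \<Rightarrow> 'v net set" where
  "regular_GFNNs \<rho> Vin D = {N. regular \<rho> D N \<and> inputs N = Vin}"

definition regular_LFNNs :: "(real \<Rightarrow> real) \<Rightarrow> 'v set \<Rightarrow> nat \<Rightarrow> 'v net set" where
  "regular_LFNNs \<rho> Vin D = {N. regular \<rho> D N \<and> lfnn D N \<and> inputs N = Vin}"

definition children_of :: "'v net \<Rightarrow> 'v set \<Rightarrow> 'v set" where
  "children_of N A = {w \<in> nodes N. par N w \<inter> A \<noteq> {}}"

text \<open>The network obtained by the modification.  The new nodes u'_1..u'_n form the
set C; the triples (alpha'_p, beta'_p, gamma'_p) are alpha c, beta c, gamma c for c in C.\<close>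
definition modify ::
  "nat \<Rightarrow> 'v net \<Rightarrow> 'v set \<Rightarrow> 'v set \<Rightarrow> 'v set \<Rightarrow> 'v set \<Rightarrow>
   ('v \<Rightarrow> real) \<Rightarrow> ('v \<Rightarrow> real) \<Rightarrow> ('v \<Rightarrow> real) \<Rightarrow> real \<Rightarrow>
   ('v \<Rightarrow> real) \<Rightarrow> ('v \<Rightarrow> real) \<Rightarrow> (nat \<Rightarrow> real) \<Rightarrow> 'v net" where
  "modify D N A B C P \<alpha> \<beta> \<gamma> \<zeta> \<kappa> \<nu> \<mu> =
    (let W = children_of N A;
         isout = A \<subseteq> outputs N;
         newE = {(y, x) \<in> edges N. y \<notin> A \<and> x \<notin> A \<and> \<not> (y \<in> B \<and> x \<in> W)}
                \<union> {(y, x). y \<in> P \<and> x \<in> C}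
                \<union> {(y, x). y \<in> C \<and> x \<in> W}
                \<union> {(y, x). y \<in> B \<and> x \<in> W \<and> weight N x y - \<alpha> y * \<nu> x \<noteq> 0};
         neww = (\<lambda>x y. if x \<in> A \<or> y \<in> A then 0
                   else if x \<in> C then (if y \<in> P then \<beta> x * \<kappa> y else 0)
                   else if y \<in> C then (if x \<in> W then - (\<alpha> y * \<nu> x) else 0)
                   else if y \<in> B \<and> x \<in> W then weight N x y - \<alpha> y * \<nu> x
                   else weight N x y);
         newb = (\<lambda>x. if x \<in> A then 0 else if x \<in> C then \<gamma> x
                   else if x \<in> W then bias N x + \<zeta> * \<nu> x else bias N x);
         newoc = (\<lambda>r. if isout \<and> r < D then outc N r + \<zeta> * \<mu> r else outc N r);
         newow = (\<lambda>r x. if isout \<and> r < D then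
                      (if x \<in> C then - (\<alpha> x * \<mu> r)
                       else if x \<in> B then outw N r x - \<alpha> x * \<mu> r
                       else if x \<in> A then 0 else outw N r x)
                    else (if x \<in> A then 0 else outw N r x));
         newout = (if isout
                   then (outputs N - (A \<union> B)) \<union> C \<union> {u \<in> B. \<exists>r<D. newow r u \<noteq> 0}
                   else outputs N)
     in \<lparr> nodes = (nodes N - A) \<union> C, edges = newE, inputs = inputs N,
          outputs = newout, weight = neww, bias = newb, outc = newoc, outw = newow \<rparr>)"

definition is_rho_modification :: "(real \<Rightarrow> real) \<Rightarrow> nat \<Rightarrow> 'v net \<Rightarrow> 'v net \<Rightarrow> bool" where
  "is_rho_modification \<rho> D N M \<longleftrightarrow> \<not> reducible \<rho> N \<and>
    (\<exists>A B C P \<alpha> \<beta> \<gamma> \<zeta> \<kappa> \<nu> \<mu>.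
       A \<noteq> {} \<and> A \<subseteq> nodes N - inputs N \<and> B \<subseteq> nodes N - inputs N \<and> A \<inter> B = {} \<and>
       (\<forall>u\<in>A \<union> B. par N u = P) \<and>
       finite C \<and> C \<noteq> {} \<and> C \<inter> nodes N = {} \<and>
       affine_symmetry \<rho> (A \<union> B \<union> C) \<zeta> \<alpha> \<beta> (\<lambda>s. if s \<in> C then \<gamma> s else bias N s) \<and>
       (\<forall>v\<in>P. \<kappa> v \<noteq> 0) \<and> (\<forall>u\<in>A \<union> B. \<forall>v\<in>P. weight N u v = \<beta> u * \<kappa> v) \<and>
       (\<forall>w\<in>children_of N A. A \<subseteq> par N w \<and> \<nu> w \<noteq> 0 \<and>
                              (\<forall>u\<in>A. weight N w u = \<nu> w * \<alpha> u)) \<and>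
       (A \<inter> outputs N = {} \<or>
        (A \<subseteq> outputs N \<and> (\<forall>r<D. \<forall>u\<in>A. outw N r u = \<mu> r * \<alpha> u))) \<and>
       M = modify D N A B C P \<alpha> \<beta> \<gamma> \<zeta> \<kappa> \<nu> \<mu>)"

definition rho_step :: "(real \<Rightarrow> real) \<Rightarrow> nat \<Rightarrow> 'v net \<Rightarrow> 'v net \<Rightarrow> bool" where
  "rho_step \<rho> D N M \<longleftrightarrow> regular \<rho> D N \<and> regular \<rho> D M \<and> inputs M = inputs N \<and>
                         is_rho_modification \<rho> D N M"

definition rho_isomorphic :: "(real \<Rightarrow> real) \<Rightarrow> nat \<Rightarrow> 'v net \<Rightarrow> 'v net \<Rightarrow> bool" where
  "rho_isomorphic \<rho> D N M \<longleftrightarrow> regular \<rho> D N \<and> regular \<rho> D M \<and> inputs N = inputs M \<and>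
                               (rho_step \<rho> D)\<^sup>*\<^sup>* N M"

end

theory Submission
  imports Defs
begin

(* In a rho-modification the nodes of A, B and the new nodes C share the parent set P with weights
   beta_u kappa_v, so each of them computes rho (beta_s S + gamma_s) of one common parent sum S, and the
   affine symmetry says that sum_s alpha_s rho (beta_s S + gamma_s) = zeta.  The contribution
   nu_w sum_{u in A} alpha_u R_u that a child w of A receives is therefore
   nu_w (zeta - sum_{s in B u C} alpha_s R_s), which is exactly what the modified weights and bias of w
   supply (likewise for the output scalars when A consists of output nodes).  So every surviving node,
   and hence the realization, keeps its value.  Modifying again with the roles of A and C exchanged and
   alpha, zeta negated restores the original network, which makes the step relation symmetric;
   reflexivity and transitivity are built into rho-isomorphism as a chain of steps. *)

section \<open>Realizations of feedforward networks\<close>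

lemma edges_subset_nodes: "gfnn D N \<Longrightarrow> (v, u) \<in> edges N \<Longrightarrow> v \<in> nodes N \<and> u \<in> nodes N"
  unfolding gfnn_def by auto

lemma par_subset_nodes: "gfnn D N \<Longrightarrow> par N u \<subseteq> nodes N"
  unfolding par_def gfnn_def by blast

lemma weight_eq_0: "gfnn D N \<Longrightarrow> v \<notin> par N u \<Longrightarrow> weight N u v = 0"
  unfolding gfnn_def par_def by blast

lemma weight_nonzero: "gfnn D N \<Longrightarrow> v \<in> par N u \<Longrightarrow> weight N u v \<noteq> 0"
  unfolding gfnn_def par_def by blast

lemma weight_outside_nodes: "gfnn D N \<Longrightarrow> u \<notin> nodes N \<or> v \<notin> nodes N \<Longrightarrow> weight N u v = 0"
  unfolding gfnn_def by blast

lemma edges_eq_weight_support: "gfnn D N \<Longrightarrow> edges N = {(v, u). weight N u v \<noteq> 0}"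
  unfolding gfnn_def by blast

lemma outw_eq_0: "gfnn D N \<Longrightarrow> w \<notin> outputs N \<Longrightarrow> outw N r w = 0"
  unfolding gfnn_def by blast

lemma outputs_eq_outw_support:
  "gfnn D N \<Longrightarrow> nondegenerate D N \<Longrightarrow> outputs N = {w. \<exists>r<D. outw N r w \<noteq> 0}"
  unfolding gfnn_def nondegenerate_def by blast

lemma wf_edges: "gfnn D N \<Longrightarrow> wf (edges N)"
proof -
  assume g: "gfnn D N"
  then have "finite (edges N)"
    unfolding gfnn_def using finite_SigmaI finite_subset by metis
  then show ?thesis
    using g finite_acyclic_wf unfolding gfnn_def by blast
qed

lemma finite_ancestors: "gfnn D N \<Longrightarrow> finite (ancestors N {u})"
proof -
  assume g: "gfnn D N"
  have "ancestors N {u} \<subseteq> insert u (nodes N)"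
    unfolding ancestors_def by (auto elim: converse_rtranclE dest: edges_subset_nodes[OF g])
  then show ?thesis
    using g unfolding gfnn_def by (meson finite_insert finite_subset)
qed

lemma ancestors_subset_nodes: "gfnn D N \<Longrightarrow> u \<in> nodes N \<Longrightarrow> ancestors N {u} \<subseteq> nodes N"
  unfolding ancestors_def by (auto elim: converse_rtranclE dest: edges_subset_nodes)

lemma card_ancestors_parent_less:
  assumes g: "gfnn D N" and v: "v \<in> par N u"
  shows "card (ancestors N {v}) < card (ancestors N {u})"
proof -
  have e: "(v, u) \<in> edges N" using v by (simp add: par_def)
  have "u \<notin> ancestors N {v}"
  proof
    assume "u \<in> ancestors N {v}"
    then have "(u, u) \<in> (edges N)\<^sup>+"
      using e unfolding ancestors_def by (simp add: rtrancl_into_trancl1)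
    then show False using g unfolding gfnn_def acyclic_def by blast
  qed
  moreover have "ancestors N {v} \<subseteq> ancestors N {u}"
    using e unfolding ancestors_def by (auto intro: rtrancl_into_rtrancl)
  moreover have "u \<in> ancestors N {u}" unfolding ancestors_def by simp
  ultimately have "ancestors N {v} \<subset> ancestors N {u}" by blast
  then show ?thesis
    using finite_ancestors[OF g] by (simp add: psubset_card_mono)
qed

lemma R_fuel_stable:
  assumes g: "gfnn D N"
  shows "card (ancestors N {u}) \<le> k \<Longrightarrow> card (ancestors N {u}) \<le> k' \<Longrightarrow>
         R_fuel \<rho> N k u t = R_fuel \<rho> N k' u t"
proof (induction u arbitrary: k k' rule: wf_induct_rule[OF wf_edges[OF g]])
  case (1 u)
  show ?case
  proof (cases "u \<in> inputs N")
    case True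
    then show ?thesis by (cases k; cases k') simp_all
  next
    case False
    have "u \<in> ancestors N {u}" unfolding ancestors_def by simp
    then have "card (ancestors N {u}) > 0"
      using finite_ancestors[OF g] card_gt_0_iff by blast
    then obtain j j' where k: "k = Suc j" "k' = Suc j'"
      using "1.prems" by (cases k; cases k') auto
    have "R_fuel \<rho> N j v t = R_fuel \<rho> N j' v t" if v: "v \<in> par N u" for v
      using "1.IH"[of v j j'] v card_ancestors_parent_less[OF g v] "1.prems" k
      by (simp add: par_def)
    then show ?thesis using False k by simp
  qed
qed

lemma node_real_eq:
  assumes g: "gfnn D N" and u: "u \<in> nodes N"
  shows "node_real \<rho> N u t = (if u \<in> inputs N then t u
           else \<rho> ((\<Sum>v\<in>par N u. weight N u v * node_real \<rho> N v t) + bias N u))"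
proof -
  have card_u: "card (ancestors N {u}) \<le> card (nodes N)"
    using ancestors_subset_nodes[OF g u] g unfolding gfnn_def by (simp add: card_mono)
  then obtain k where k: "card (nodes N) = Suc k"
    using u g unfolding gfnn_def by (cases "card (nodes N)") auto
  have "R_fuel \<rho> N k v t = node_real \<rho> N v t" if v: "v \<in> par N u" for v
    unfolding node_real_def
    by (rule R_fuel_stable[OF g]) (use card_ancestors_parent_less[OF g v] card_u k in simp_all)
  then show ?thesis
    unfolding node_real_def k by simp
qed

lemma sum_par_superset:
  assumes g: "gfnn D N" and T: "finite T" "par N u \<subseteq> T"
    and fh: "\<And>v. v \<in> par N u \<Longrightarrow> f v = h v"
  shows "(\<Sum>v\<in>par N u. weight N u v * h v) = (\<Sum>v\<in>T. weight N u v * f v)"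
  using weight_eq_0[OF g] fh by (intro sum.mono_neutral_cong_left[OF T]) auto

lemma node_real_unique:
  assumes g: "gfnn D N" and T: "finite T" "nodes N \<subseteq> T"
    and f: "\<And>u. u \<in> nodes N \<Longrightarrow> f u = (if u \<in> inputs N then t u
              else \<rho> ((\<Sum>v\<in>T. weight N u v * f v) + bias N u))"
  shows "u \<in> nodes N \<Longrightarrow> node_real \<rho> N u t = f u"
proof (induction u rule: wf_induct_rule[OF wf_edges[OF g]])
  case (1 u)
  have "node_real \<rho> N v t = f v" if "v \<in> par N u" for v
    using "1.IH" that par_subset_nodes[OF g] by (auto simp: par_def)
  then have "(\<Sum>v\<in>par N u. weight N u v * node_real \<rho> N v t) = (\<Sum>v\<in>T. weight N u v * f v)"
    using sum_par_superset[OF g T(1)] T(2) par_subset_nodes[OF g] by (metis order.trans)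
  then show ?case
    using node_real_eq[OF g "1.prems"] f[OF "1.prems"] by simp
qed

lemma realization_eq_sum:
  assumes g: "gfnn D N" and T: "finite T" "outputs N \<subseteq> T"
    and f: "\<And>w. w \<in> outputs N \<Longrightarrow> f w = node_real \<rho> N w t"
  shows "realization \<rho> N t r = outc N r + (\<Sum>w\<in>T. outw N r w * f w)"
  unfolding realization_def
  using outw_eq_0[OF g] f by (simp, intro sum.mono_neutral_cong_left[OF T]) auto

section \<open>Affine symmetries\<close>

lemma lin_dep_with_one_cong:
  "(\<And>s. s \<in> J \<Longrightarrow> \<gamma> s = \<gamma>' s) \<Longrightarrow> lin_dep_with_one \<rho> J \<beta> \<gamma> = lin_dep_with_one \<rho> J \<beta> \<gamma>'"
  unfolding lin_dep_with_one_def by (simp cong: sum.cong)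

lemma affine_symmetry_cong:
  assumes "\<And>s. s \<in> I \<Longrightarrow> \<gamma> s = \<gamma>' s"
  shows "affine_symmetry \<rho> I \<zeta> \<alpha> \<beta> \<gamma> = affine_symmetry \<rho> I \<zeta> \<alpha> \<beta> \<gamma>'"
proof -
  have "J \<subset> I \<Longrightarrow> lin_dep_with_one \<rho> J \<beta> \<gamma> = lin_dep_with_one \<rho> J \<beta> \<gamma>'" for J
    using assms by (intro lin_dep_with_one_cong) blast
  then show ?thesis
    unfolding affine_symmetry_def using assms by (simp cong: sum.cong)
qed

lemma affine_symmetry_uminus:
  "affine_symmetry \<rho> I \<zeta> \<alpha> \<beta> \<gamma> \<Longrightarrow> affine_symmetry \<rho> I (- \<zeta>) (\<lambda>s. - \<alpha> s) \<beta> \<gamma>"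
  unfolding affine_symmetry_def by (simp add: sum_negf)

section \<open>\<rho>-modifications\<close>

lemma
  shows nodes_modify: "nodes (modify D N A B C P \<alpha> \<beta> \<gamma> \<zeta> \<kappa> \<nu> \<mu>) = (nodes N - A) \<union> C"
    and inputs_modify: "inputs (modify D N A B C P \<alpha> \<beta> \<gamma> \<zeta> \<kappa> \<nu> \<mu>) = inputs N"
    and edges_modify: "edges (modify D N A B C P \<alpha> \<beta> \<gamma> \<zeta> \<kappa> \<nu> \<mu>) =
      {(y, x) \<in> edges N. y \<notin> A \<and> x \<notin> A \<and> \<not> (y \<in> B \<and> x \<in> children_of N A)}
      \<union> {(y, x). y \<in> P \<and> x \<in> C}
      \<union> {(y, x). y \<in> C \<and> x \<in> children_of N A}
      \<union> {(y, x). y \<in> B \<and> x \<in> children_of N A \<and> weight N x y - \<alpha> y * \<nu> x \<noteq> 0}"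
    and weight_modify: "weight (modify D N A B C P \<alpha> \<beta> \<gamma> \<zeta> \<kappa> \<nu> \<mu>) x y =
      (if x \<in> A \<or> y \<in> A then 0
       else if x \<in> C then (if y \<in> P then \<beta> x * \<kappa> y else 0)
       else if y \<in> C then (if x \<in> children_of N A then - (\<alpha> y * \<nu> x) else 0)
       else if y \<in> B \<and> x \<in> children_of N A then weight N x y - \<alpha> y * \<nu> x
       else weight N x y)"
    and bias_modify: "bias (modify D N A B C P \<alpha> \<beta> \<gamma> \<zeta> \<kappa> \<nu> \<mu>) x =
      (if x \<in> A then 0 else if x \<in> C then \<gamma> x
       else if x \<in> children_of N A then bias N x + \<zeta> * \<nu> x else bias N x)"
    and outc_modify: "outc (modify D N A B C P \<alpha> \<beta> \<gamma> \<zeta> \<kappa> \<nu> \<mu>) r =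
      (if A \<subseteq> outputs N \<and> r < D then outc N r + \<zeta> * \<mu> r else outc N r)"
    and outw_modify: "outw (modify D N A B C P \<alpha> \<beta> \<gamma> \<zeta> \<kappa> \<nu> \<mu>) r x =
      (if A \<subseteq> outputs N \<and> r < D then
         (if x \<in> C then - (\<alpha> x * \<mu> r)
          else if x \<in> B then outw N r x - \<alpha> x * \<mu> r
          else if x \<in> A then 0 else outw N r x)
       else (if x \<in> A then 0 else outw N r x))"
    and outputs_modify: "outputs (modify D N A B C P \<alpha> \<beta> \<gamma> \<zeta> \<kappa> \<nu> \<mu>) =
      (if A \<subseteq> outputs N
       then (outputs N - (A \<union> B)) \<union> C
            \<union> {u \<in> B. \<exists>r<D. outw (modify D N A B C P \<alpha> \<beta> \<gamma> \<zeta> \<kappa> \<nu> \<mu>) r u \<noteq> 0}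
       else outputs N)"
  by (simp_all add: modify_def Let_def)

locale rho_modification =
  fixes \<rho> :: "real \<Rightarrow> real" and D :: nat and N :: "'v net" and A B C P :: "'v set"
    and \<alpha> \<beta> \<gamma> :: "'v \<Rightarrow> real" and \<zeta> :: real and \<kappa> \<nu> :: "'v \<Rightarrow> real" and \<mu> :: "nat \<Rightarrow> real"
  assumes gfnn: "gfnn D N"
    and A_nonempty: "A \<noteq> {}" and A_hidden: "A \<subseteq> nodes N - inputs N"
    and B_hidden: "B \<subseteq> nodes N - inputs N" and A_B_disjoint: "A \<inter> B = {}"
    and par_A_B: "\<forall>u\<in>A \<union> B. par N u = P"
    and finite_C: "finite C" and C_nonempty: "C \<noteq> {}" and C_fresh: "C \<inter> nodes N = {}"
    and symmetry: "affine_symmetry \<rho> (A \<union> B \<union> C) \<zeta> \<alpha> \<beta> (\<lambda>s. if s \<in> C then \<gamma> s else bias N s)"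
    and \<kappa>_nonzero: "\<forall>v\<in>P. \<kappa> v \<noteq> 0"
    and weight_A_B: "\<forall>u\<in>A \<union> B. \<forall>v\<in>P. weight N u v = \<beta> u * \<kappa> v"
    and children_A: "\<forall>w\<in>children_of N A. A \<subseteq> par N w \<and> \<nu> w \<noteq> 0 \<and>
                                          (\<forall>u\<in>A. weight N w u = \<nu> w * \<alpha> u)"
    and outputs_A: "A \<inter> outputs N = {} \<or>
                    (A \<subseteq> outputs N \<and> (\<forall>r<D. \<forall>u\<in>A. outw N r u = \<mu> r * \<alpha> u))"

lemma is_rho_modification_iff:
  "gfnn D N \<Longrightarrow> is_rho_modification \<rho> D N M \<longleftrightarrow> \<not> reducible \<rho> N \<and>
     (\<exists>A B C P \<alpha> \<beta> \<gamma> \<zeta> \<kappa> \<nu> \<mu>. rho_modification \<rho> D N A B C P \<alpha> \<beta> \<gamma> \<zeta> \<kappa> \<nu> \<mu> \<and>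
        M = modify D N A B C P \<alpha> \<beta> \<gamma> \<zeta> \<kappa> \<nu> \<mu>)"
  unfolding is_rho_modification_def rho_modification_def by (simp add: conj_assoc)

context rho_modification
begin

abbreviation M where "M \<equiv> modify D N A B C P \<alpha> \<beta> \<gamma> \<zeta> \<kappa> \<nu> \<mu>"
abbreviation W where "W \<equiv> children_of N A"
abbreviation I where "I \<equiv> A \<union> B \<union> C"

lemma is_rho_modification: "\<not> reducible \<rho> N \<Longrightarrow> is_rho_modification \<rho> D N M"
  using is_rho_modification_iff[OF gfnn] rho_modification_axioms by blast

lemma P_subset_nodes: "P \<subseteq> nodes N"
  using A_nonempty par_A_B par_subset_nodes[OF gfnn] by blast

lemma A_P_disjoint: "A \<inter> P = {}"
proof -
  have "(a, a) \<notin> edges N" for a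
    using gfnn unfolding gfnn_def acyclic_def by blast
  then show ?thesis using par_A_B unfolding par_def by blast
qed

lemma W_subset_nodes: "W \<subseteq> nodes N"
  unfolding children_of_def by blast

lemma A_B_W_disjoint: "(A \<union> B) \<inter> W = {}"
  using A_P_disjoint par_A_B unfolding children_of_def by blast

lemma weight_modify_removed: "x \<in> A \<Longrightarrow> weight M x v = 0"
  by (simp add: weight_modify)

lemma weight_modify_new: "x \<in> C \<Longrightarrow> weight M x v = (if v \<in> P then \<beta> x * \<kappa> v else 0)"
  using A_P_disjoint A_hidden C_fresh by (auto simp: weight_modify)

lemma weight_modify_child:
  assumes x: "x \<in> W"
  shows "weight M x v = weight N x v - \<nu> x * (if v \<in> I then \<alpha> v else 0)"
proof -
  have x': "x \<notin> A" "x \<notin> C" using x A_B_W_disjoint W_subset_nodes C_fresh by blast+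
  consider "v \<in> A" | "v \<in> B" | "v \<in> C" | "v \<notin> I" by blast
  then show ?thesis
  proof cases
    case 1
    then show ?thesis using x x' children_A by (simp add: weight_modify)
  next
    case 2
    then have "v \<notin> A" "v \<notin> C" using A_B_disjoint B_hidden C_fresh by blast+
    then show ?thesis using 2 x x' by (simp add: weight_modify mult.commute)
  next
    case 3
    then have "v \<notin> A" "weight N x v = 0"
      using A_hidden C_fresh weight_outside_nodes[OF gfnn] by blast+
    then show ?thesis using 3 x x' by (simp add: weight_modify mult.commute)
  next
    case 4
    then show ?thesis using x' by (simp add: weight_modify)
  qed
qed

lemma weight_modify_other:
  assumes x: "x \<notin> A \<union> C \<union> W"
  shows "weight M x v = weight N x v"
proof -
  have "weight N x v = 0" if v: "v \<in> A \<union> C"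
  proof (rule ccontr)
    assume "weight N x v \<noteq> 0"
    then have par: "v \<in> par N x" using weight_eq_0[OF gfnn] by blast
    then have "x \<in> nodes N" "v \<in> nodes N"
      using edges_subset_nodes[OF gfnn] by (auto simp: par_def)
    then show False using v x par C_fresh unfolding children_of_def by blast
  qed
  then show ?thesis using x by (simp add: weight_modify)
qed

lemma bias_C: "x \<in> C \<Longrightarrow> bias N x = 0"
  using gfnn C_fresh unfolding gfnn_def by blast

lemma edges_modify_weight_support:
  assumes \<beta>_C: "\<forall>x\<in>C. \<forall>y\<in>P. \<beta> x \<noteq> 0" and \<alpha>_C: "\<forall>y\<in>C. \<forall>x\<in>W. \<alpha> y \<noteq> 0"
  shows "edges M = {(y, x). weight M x y \<noteq> 0}"
proof -
  have "(y, x) \<in> edges M \<longleftrightarrow> weight M x y \<noteq> 0" for x y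
  proof -
    consider "x \<in> A \<or> y \<in> A" | "x \<in> C" | "x \<notin> A \<union> C" "y \<in> C"
      | "x \<notin> A \<union> C" "y \<notin> A \<union> C" "y \<in> B \<and> x \<in> W"
      | "x \<notin> A \<union> C" "y \<notin> A \<union> C" "\<not> (y \<in> B \<and> x \<in> W)"
      by blast
    then show ?thesis
    proof cases
      case 1
      then have "y \<notin> P \<or> x \<notin> C" "y \<notin> C \<or> x \<notin> W" "y \<notin> B \<or> x \<notin> W"
        using A_P_disjoint A_B_disjoint A_B_W_disjoint A_hidden C_fresh by blast+
      then show ?thesis using 1 by (auto simp: edges_modify weight_modify)
    next
      case 2
      then have "(y, x) \<notin> edges N" "x \<notin> W" "x \<notin> A"
        using C_fresh W_subset_nodes A_hidden edges_subset_nodes[OF gfnn] by blast+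
      then show ?thesis using 2 \<beta>_C \<kappa>_nonzero A_P_disjoint by (auto simp: edges_modify weight_modify)
    next
      case 3
      then have "(y, x) \<notin> edges N" "y \<notin> P" "y \<notin> B" "y \<notin> A"
        using C_fresh P_subset_nodes A_hidden B_hidden edges_subset_nodes[OF gfnn] by blast+
      then show ?thesis using 3 \<alpha>_C children_A by (auto simp: edges_modify weight_modify)
    next
      case 4
      then show ?thesis by (auto simp: edges_modify weight_modify)
    next
      case 5
      then show ?thesis
        using edges_eq_weight_support[OF gfnn] by (auto simp: edges_modify weight_modify)
    qed
  qed
  then show ?thesis by blast
qed

lemma par_modify_new: "x \<in> C \<Longrightarrow> par M x = P"
  using C_fresh W_subset_nodes B_hidden by (auto simp: par_def edges_modify dest: edges_subset_nodes[OF gfnn])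

lemma par_modify_other:
  assumes x: "x \<notin> A \<union> C \<union> W"
  shows "par M x = par N x"
proof -
  have "y \<notin> A" if "(y, x) \<in> edges N" for y
    using x that edges_subset_nodes[OF gfnn] unfolding children_of_def par_def by blast
  then show ?thesis using x by (auto simp: par_def edges_modify)
qed

lemma children_of_modify: "children_of M C = W"
proof -
  have "(c, w) \<in> edges M \<longleftrightarrow> w \<in> W" if "c \<in> C" for c w
    using that C_fresh P_subset_nodes B_hidden by (auto simp: edges_modify dest: edges_subset_nodes[OF gfnn])
  moreover have "W \<subseteq> nodes M"
    using A_B_W_disjoint by (auto simp: nodes_modify children_of_def)
  ultimately show ?thesis
    using C_nonempty unfolding children_of_def par_def by blast
qed

lemma outw_modify_out:
  assumes out: "A \<subseteq> outputs N" and r: "r < D"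
  shows "outw M r v = outw N r v - \<mu> r * (if v \<in> I then \<alpha> v else 0)"
proof -
  have "\<forall>u\<in>A. outw N r u = \<mu> r * \<alpha> u" using outputs_A out A_nonempty r by blast
  moreover have "v \<in> C \<Longrightarrow> outw N r v = 0"
    using outw_eq_0[OF gfnn] gfnn C_fresh unfolding gfnn_def by blast
  ultimately show ?thesis
    using out r A_B_disjoint C_fresh B_hidden by (auto simp: outw_modify mult.commute)
qed

lemma outw_modify_same:
  assumes "\<not> (A \<subseteq> outputs N \<and> r < D)"
  shows "outw M r v = outw N r v"
proof -
  have "v \<in> A \<Longrightarrow> outw N r v = 0"
    using assms outputs_A outw_eq_0[OF gfnn] gfnn unfolding gfnn_def by (metis disjoint_iff not_less)
  then show ?thesis unfolding outw_modify if_not_P[OF assms] by simp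
qed

lemma outputs_modify_new_iff: "C \<subseteq> outputs M \<longleftrightarrow> A \<subseteq> outputs N"
  using C_nonempty C_fresh gfnn unfolding gfnn_def by (auto simp: outputs_modify)

definition modified_real :: "('v \<Rightarrow> real) \<Rightarrow> 'v \<Rightarrow> real" where
  "modified_real t x = (if x \<in> C then \<rho> (\<beta> x * (\<Sum>v\<in>P. \<kappa> v * node_real \<rho> N v t) + \<gamma> x)
                        else node_real \<rho> N x t)"

lemma sum_modified_real_symmetry: "(\<Sum>y\<in>I. \<alpha> y * modified_real t y) = \<zeta>"
proof -
  let ?S = "\<Sum>v\<in>P. \<kappa> v * node_real \<rho> N v t"
  have "modified_real t y = \<rho> (\<beta> y * ?S + (if y \<in> C then \<gamma> y else bias N y))" if y: "y \<in> I" for y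
  proof (cases "y \<in> C")
    case False
    then have y': "y \<in> A \<union> B" "y \<in> nodes N" "y \<notin> inputs N" using y A_hidden B_hidden by auto
    have "(\<Sum>v\<in>par N y. weight N y v * node_real \<rho> N v t) = (\<Sum>v\<in>P. \<beta> y * (\<kappa> v * node_real \<rho> N v t))"
      using par_A_B weight_A_B y'(1) by (simp add: mult.assoc)
    then show ?thesis
      using node_real_eq[OF gfnn y'(2)] y' False by (simp add: modified_real_def sum_distrib_left)
  qed (simp add: modified_real_def)
  then have "(\<Sum>y\<in>I. \<alpha> y * modified_real t y) =
             (\<Sum>y\<in>I. \<alpha> y * \<rho> (\<beta> y * ?S + (if y \<in> C then \<gamma> y else bias N y)))"
    by simp
  also have "\<dots> = \<zeta>" using symmetry unfolding affine_symmetry_def by blast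
  finally show ?thesis .
qed

lemma sum_modified_real_shift:
  assumes "finite T" "I \<subseteq> T"
  shows "(\<Sum>v\<in>T. (f v - c * (if v \<in> I then \<alpha> v else 0)) * modified_real t v)
         = (\<Sum>v\<in>T. f v * modified_real t v) - c * \<zeta>"
proof -
  have "(\<Sum>v\<in>T. (if v \<in> I then \<alpha> v else 0) * modified_real t v) = (\<Sum>v\<in>I. \<alpha> v * modified_real t v)"
    using assms by (intro sum.mono_neutral_cong_right) auto
  moreover have "(\<Sum>v\<in>T. (f v - c * (if v \<in> I then \<alpha> v else 0)) * modified_real t v)
      = (\<Sum>v\<in>T. f v * modified_real t v)
        - c * (\<Sum>v\<in>T. (if v \<in> I then \<alpha> v else 0) * modified_real t v)"
    by (simp add: left_diff_distrib sum_subtractf sum_distrib_left mult.assoc)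
  ultimately show ?thesis by (simp add: sum_modified_real_symmetry)
qed

lemma finite_nodes_C: "finite (nodes N \<union> C)"
  using gfnn finite_C unfolding gfnn_def by simp

lemma weighted_sum_modify_new:
  assumes x: "x \<in> C"
  shows "(\<Sum>v\<in>nodes N \<union> C. weight M x v * modified_real t v)
         = \<beta> x * (\<Sum>v\<in>P. \<kappa> v * node_real \<rho> N v t)"
proof -
  have "(\<Sum>v\<in>nodes N \<union> C. weight M x v * modified_real t v)
        = (\<Sum>v\<in>P. \<beta> x * (\<kappa> v * modified_real t v))"
    using x P_subset_nodes finite_nodes_C
    by (intro sum.mono_neutral_cong_right) (auto simp: weight_modify_new)
  also have "\<dots> = \<beta> x * (\<Sum>v\<in>P. \<kappa> v * node_real \<rho> N v t)"
    using P_subset_nodes C_fresh unfolding sum_distrib_left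
    by (intro sum.cong) (auto simp: modified_real_def)
  finally show ?thesis .
qed

lemma weighted_sum_modify_old:
  assumes x: "x \<in> nodes N - A"
  shows "(\<Sum>v\<in>nodes N \<union> C. weight M x v * modified_real t v) + bias M x
         = (\<Sum>v\<in>par N x. weight N x v * node_real \<rho> N v t) + bias N x"
proof -
  have x_C: "x \<notin> C" using x C_fresh by blast
  have "(\<Sum>v\<in>nodes N \<union> C. weight M x v * modified_real t v) + bias M x
        = (\<Sum>v\<in>nodes N \<union> C. weight N x v * modified_real t v) + bias N x"
  proof (cases "x \<in> W")
    case True
    have "I \<subseteq> nodes N \<union> C" using A_hidden B_hidden by blast
    then have "(\<Sum>v\<in>nodes N \<union> C. weight M x v * modified_real t v)
               = (\<Sum>v\<in>nodes N \<union> C. weight N x v * modified_real t v) - \<nu> x * \<zeta>"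
      using True by (simp only: weight_modify_child sum_modified_real_shift[OF finite_nodes_C])
    then show ?thesis using True x x_C by (simp add: bias_modify algebra_simps)
  next
    case False
    then show ?thesis using x x_C by (simp add: weight_modify_other bias_modify)
  qed
  also have "(\<Sum>v\<in>nodes N \<union> C. weight N x v * modified_real t v)
             = (\<Sum>v\<in>par N x. weight N x v * node_real \<rho> N v t)"
    using par_subset_nodes[OF gfnn] C_fresh
    by (intro sum_par_superset[OF gfnn finite_nodes_C, symmetric]) (auto simp: modified_real_def)
  finally show ?thesis .
qed

lemma modified_real_rec:
  assumes x: "x \<in> nodes M"
  shows "modified_real t x = (if x \<in> inputs M then t x
           else \<rho> ((\<Sum>v\<in>nodes N \<union> C. weight M x v * modified_real t v) + bias M x))"
proof (cases "x \<in> C")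
  case True
  moreover have "x \<notin> inputs M" "x \<notin> A"
    using True C_fresh A_hidden gfnn unfolding gfnn_def by (auto simp: inputs_modify)
  ultimately show ?thesis
    using weighted_sum_modify_new[OF True] by (simp add: bias_modify modified_real_def[of t x])
next
  case False
  then have x': "x \<in> nodes N - A" using x by (auto simp: nodes_modify)
  then show ?thesis
    using False node_real_eq[OF gfnn] weighted_sum_modify_old[OF x']
    by (simp add: modified_real_def inputs_modify)
qed

lemma par_C_B: "\<forall>u\<in>C \<union> B. par M u = P"
proof -
  have "u \<notin> A \<union> C \<union> W" if "u \<in> B" for u
    using that A_B_disjoint A_B_W_disjoint C_fresh B_hidden by blast
  then show ?thesis using par_modify_new par_modify_other par_A_B by blast
qed

lemma weight_C_B: "\<forall>u\<in>C \<union> B. \<forall>v\<in>P. weight M u v = \<beta> u * \<kappa> v"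
proof -
  have "u \<notin> A \<union> C \<union> W" if "u \<in> B" for u
    using that A_B_disjoint A_B_W_disjoint C_fresh B_hidden by blast
  then show ?thesis using weight_modify_new weight_modify_other weight_A_B by auto
qed

lemma symmetry_reverse:
  "affine_symmetry \<rho> (C \<union> B \<union> A) (- \<zeta>) (\<lambda>s. - \<alpha> s) \<beta> (\<lambda>s. if s \<in> A then bias N s else bias M s)"
proof -
  have bias_I: "(if s \<in> A then bias N s else bias M s) = (if s \<in> C then \<gamma> s else bias N s)"
    if "s \<in> I" for s
    using that A_B_W_disjoint A_B_disjoint C_fresh A_hidden by (auto simp: bias_modify)
  have "affine_symmetry \<rho> I (- \<zeta>) (\<lambda>s. - \<alpha> s) \<beta> (\<lambda>s. if s \<in> A then bias N s else bias M s)"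
    by (rule iffD2[OF affine_symmetry_cong[OF bias_I] affine_symmetry_uminus[OF symmetry]])
  moreover have "C \<union> B \<union> A = I" by blast
  ultimately show ?thesis by simp
qed

lemma children_C:
  "\<forall>w\<in>children_of M C. C \<subseteq> par M w \<and> \<nu> w \<noteq> 0 \<and> (\<forall>u\<in>C. weight M w u = \<nu> w * - \<alpha> u)"
proof (unfold children_of_modify, intro ballI conjI)
  fix w assume w: "w \<in> W"
  show "C \<subseteq> par M w" using w by (auto simp: par_def edges_modify)
  show "\<nu> w \<noteq> 0" using w children_A by blast
  show "weight M w u = \<nu> w * - \<alpha> u" if u: "u \<in> C" for u
  proof -
    have "weight N w u = 0"
      using u C_fresh weight_outside_nodes[OF gfnn] by blast
    then show ?thesis using w u by (simp add: weight_modify_child)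
  qed
qed

lemma outputs_C:
  "C \<inter> outputs M = {} \<or> (C \<subseteq> outputs M \<and> (\<forall>r<D. \<forall>u\<in>C. outw M r u = \<mu> r * - \<alpha> u))"
proof (cases "A \<subseteq> outputs N")
  case True
  then show ?thesis using outputs_modify_new_iff by (simp add: outw_modify)
next
  case False
  then show ?thesis using C_fresh gfnn unfolding gfnn_def by (auto simp: outputs_modify)
qed

end

locale rho_modification_gfnn = rho_modification +
  assumes gfnn_modify: "gfnn D (modify D N A B C P \<alpha> \<beta> \<gamma> \<zeta> \<kappa> \<nu> \<mu>)"
begin

lemma node_real_modify: "x \<in> nodes M \<Longrightarrow> node_real \<rho> M x t = modified_real t x"
  by (rule node_real_unique[OF gfnn_modify finite_nodes_C _ modified_real_rec])
    (auto simp: nodes_modify)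

lemma realization_modify:
  assumes r: "r < D"
  shows "realization \<rho> M t r = realization \<rho> N t r"
proof -
  have out_M: "outputs M \<subseteq> nodes N \<union> C" and out_N: "outputs N \<subseteq> nodes N \<union> C"
    using gfnn_modify gfnn unfolding gfnn_def by (auto simp: nodes_modify)
  have "realization \<rho> M t r = outc M r + (\<Sum>w\<in>nodes N \<union> C. outw M r w * modified_real t w)"
    using gfnn_modify unfolding gfnn_def
    by (intro realization_eq_sum[OF gfnn_modify finite_nodes_C out_M]) (auto simp: node_real_modify)
  also have "\<dots> = outc N r + (\<Sum>w\<in>nodes N \<union> C. outw N r w * modified_real t w)"
  proof (cases "A \<subseteq> outputs N")
    case True
    have "I \<subseteq> nodes N \<union> C" using A_hidden B_hidden by blast
    then have "(\<Sum>w\<in>nodes N \<union> C. outw M r w * modified_real t w)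
               = (\<Sum>w\<in>nodes N \<union> C. outw N r w * modified_real t w) - \<mu> r * \<zeta>"
      using True r by (simp only: outw_modify_out sum_modified_real_shift[OF finite_nodes_C])
    then show ?thesis using True r by (simp add: outc_modify)
  next
    case False
    then show ?thesis by (simp add: outc_modify outw_modify_same)
  qed
  also have "\<dots> = realization \<rho> N t r"
    using gfnn C_fresh unfolding gfnn_def
    by (intro realization_eq_sum[OF gfnn finite_nodes_C out_N, symmetric])
      (auto simp: modified_real_def)
  finally show ?thesis .
qed

sublocale reverse: rho_modification \<rho> D M C B A P "\<lambda>s. - \<alpha> s" \<beta> "bias N" "- \<zeta>" \<kappa> \<nu> \<mu>
proof
  show "gfnn D M" by (rule gfnn_modify)
  show "C \<noteq> {}" "A \<noteq> {}" "finite A" "\<forall>v\<in>P. \<kappa> v \<noteq> 0"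
    using C_nonempty A_nonempty A_hidden gfnn \<kappa>_nonzero unfolding gfnn_def
    by (auto intro: finite_subset)
  show "C \<subseteq> nodes M - inputs M" "B \<subseteq> nodes M - inputs M" "C \<inter> B = {}" "A \<inter> nodes M = {}"
    using C_fresh A_hidden B_hidden A_B_disjoint gfnn unfolding gfnn_def
    by (auto simp: nodes_modify inputs_modify)
qed (fact par_C_B weight_C_B symmetry_reverse children_C outputs_C)+

lemma weight_modify_reverse: "weight reverse.M x v = weight N x v"
proof -
  consider "x \<in> C" | "x \<in> A" | "x \<in> W" | "x \<notin> C \<union> A \<union> W" by blast
  then show ?thesis
  proof cases
    case 1
    then have "x \<notin> nodes N" using C_fresh by blast
    then show ?thesis
      using weight_outside_nodes[OF gfnn] reverse.weight_modify_removed[OF 1] by simp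
  next
    case 2
    then show ?thesis
      using reverse.weight_modify_new weight_A_B par_A_B weight_eq_0[OF gfnn] by auto
  next
    case 3
    then show ?thesis
      using children_of_modify reverse.weight_modify_child weight_modify_child by auto
  next
    case 4
    then show ?thesis
      using children_of_modify reverse.weight_modify_other weight_modify_other by auto
  qed
qed

lemma edges_modify_reverse: "edges reverse.M = edges N"
proof -
  have "\<forall>x\<in>A. \<forall>y\<in>P. \<beta> x \<noteq> 0"
    using weight_A_B par_A_B weight_nonzero[OF gfnn] by fastforce
  moreover have "\<forall>y\<in>A. \<forall>x\<in>children_of M C. - \<alpha> y \<noteq> 0"
    using children_of_modify children_A weight_nonzero[OF gfnn] by fastforce
  ultimately show ?thesis
    using reverse.edges_modify_weight_support edges_eq_weight_support[OF gfnn]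
    by (simp add: weight_modify_reverse)
qed

lemma bias_modify_reverse: "bias reverse.M x = bias N x"
  using bias_C by (simp add: bias_modify children_of_modify)

lemma outc_modify_reverse: "outc reverse.M r = outc N r"
  by (simp add: outc_modify outputs_modify_new_iff)

lemma outw_modify_reverse: "outw reverse.M r v = outw N r v"
proof (cases "A \<subseteq> outputs N \<and> r < D")
  case True
  then show ?thesis
    using outputs_modify_new_iff reverse.outw_modify_out outw_modify_out by auto
next
  case False
  then show ?thesis
    using outputs_modify_new_iff reverse.outw_modify_same outw_modify_same by auto
qed

lemma outputs_modify_reverse:
  assumes nondeg: "nondegenerate D N"
  shows "outputs reverse.M = outputs N"
proof (cases "A \<subseteq> outputs N")
  case True
  have "{u \<in> B. \<exists>r<D. outw reverse.M r u \<noteq> 0} = B \<inter> outputs N"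
    using outputs_eq_outw_support[OF gfnn nondeg] by (auto simp: outw_modify_reverse)
  moreover have "outputs M - (C \<union> B) = outputs N - (A \<union> B)"
    using True C_fresh gfnn unfolding gfnn_def by (auto simp: outputs_modify)
  ultimately show ?thesis
    using True outputs_modify_new_iff by (auto simp: outputs_modify[of D M C B A])
next
  case False
  then show ?thesis using outputs_modify_new_iff by (simp add: outputs_modify)
qed

lemma nodes_modify_reverse: "nodes reverse.M = nodes N"
  using A_hidden C_fresh by (auto simp: nodes_modify)

lemma modify_reverse: "nondegenerate D N \<Longrightarrow> reverse.M = N"
  by (intro net.equality)
    (simp_all add: nodes_modify_reverse inputs_modify edges_modify_reverse outputs_modify_reverse
      weight_modify_reverse bias_modify_reverse outc_modify_reverse outw_modify_reverse fun_eq_iff)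

end

section \<open>\<rho>-isomorphism\<close>

lemma rho_stepE:
  assumes "rho_step \<rho> D N M"
  obtains A B C P \<alpha> \<beta> \<gamma> \<zeta> \<kappa> \<nu> \<mu>
  where "rho_modification_gfnn \<rho> D N A B C P \<alpha> \<beta> \<gamma> \<zeta> \<kappa> \<nu> \<mu>"
    and "M = modify D N A B C P \<alpha> \<beta> \<gamma> \<zeta> \<kappa> \<nu> \<mu>"
proof -
  have gfnn: "gfnn D N" "gfnn D M" and modification: "is_rho_modification \<rho> D N M"
    using assms unfolding rho_step_def regular_def by blast+
  obtain A B C P \<alpha> \<beta> \<gamma> \<zeta> \<kappa> \<nu> \<mu>
    where "rho_modification \<rho> D N A B C P \<alpha> \<beta> \<gamma> \<zeta> \<kappa> \<nu> \<mu>"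
      and M: "M = modify D N A B C P \<alpha> \<beta> \<gamma> \<zeta> \<kappa> \<nu> \<mu>"
    using modification unfolding is_rho_modification_iff[OF gfnn(1)] by (elim conjE exE) auto
  then have "rho_modification_gfnn \<rho> D N A B C P \<alpha> \<beta> \<gamma> \<zeta> \<kappa> \<nu> \<mu>"
    using gfnn(2) by (simp add: rho_modification_gfnn_def rho_modification_gfnn_axioms_def)
  then show ?thesis using M by (rule that)
qed

lemma rho_step_realization: "rho_step \<rho> D N M \<Longrightarrow> r < D \<Longrightarrow> realization \<rho> M t r = realization \<rho> N t r"
  by (erule rho_stepE) (simp add: rho_modification_gfnn.realization_modify)

lemma rho_step_sym:
  assumes step: "rho_step \<rho> D N M"
  shows "rho_step \<rho> D M N"
proof -
  obtain A B C P \<alpha> \<beta> \<gamma> \<zeta> \<kappa> \<nu> \<mu>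
    where loc: "rho_modification_gfnn \<rho> D N A B C P \<alpha> \<beta> \<gamma> \<zeta> \<kappa> \<nu> \<mu>"
      and M: "M = modify D N A B C P \<alpha> \<beta> \<gamma> \<zeta> \<kappa> \<nu> \<mu>"
    using step by (rule rho_stepE)
  interpret rho_modification_gfnn \<rho> D N A B C P \<alpha> \<beta> \<gamma> \<zeta> \<kappa> \<nu> \<mu> by (fact loc)
  have "\<not> reducible \<rho> M" "nondegenerate D N"
    using step unfolding rho_step_def regular_def by blast+
  then have "is_rho_modification \<rho> D M N"
    using reverse.is_rho_modification modify_reverse M by simp
  then show ?thesis using step unfolding rho_step_def by simp
qed

lemma rho_isomorphic_sym: "rho_isomorphic \<rho> D N M \<Longrightarrow> rho_isomorphic \<rho> D M N"
proof -
  assume iso: "rho_isomorphic \<rho> D N M"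
  have "(rho_step \<rho> D)\<^sup>*\<^sup>* N M" using iso unfolding rho_isomorphic_def by blast
  then have "(rho_step \<rho> D)\<^sup>*\<^sup>* M N"
  proof (induction rule: rtranclp_induct)
    case (step K L)
    then show ?case
      using rho_step_sym by (metis converse_rtranclp_into_rtranclp)
  qed simp
  then show ?thesis using iso unfolding rho_isomorphic_def by simp
qed

lemma rho_isomorphic_trans:
  "rho_isomorphic \<rho> D N M \<Longrightarrow> rho_isomorphic \<rho> D M K \<Longrightarrow> rho_isomorphic \<rho> D N K"
  unfolding rho_isomorphic_def by auto

lemma rho_isomorphic_realization:
  assumes "rho_isomorphic \<rho> D N M" and "r < D"
  shows "realization \<rho> N t r = realization \<rho> M t r"
proof -
  have "(rho_step \<rho> D)\<^sup>*\<^sup>* N M" using assms(1) unfolding rho_isomorphic_def by blast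
  then show ?thesis
    by (induction rule: rtranclp_induct) (simp_all add: rho_step_realization[OF _ assms(2)])
qed

lemma equiv_rho_isomorphic:
  assumes "\<And>N. N \<in> S \<Longrightarrow> regular \<rho> D N"
  shows "equiv S {(N, M). N \<in> S \<and> M \<in> S \<and> rho_isomorphic \<rho> D N M}"
proof (rule equivI)
  show "{(N, M). N \<in> S \<and> M \<in> S \<and> rho_isomorphic \<rho> D N M} \<subseteq> S \<times> S" by blast
  show "refl_on S {(N, M). N \<in> S \<and> M \<in> S \<and> rho_isomorphic \<rho> D N M}"
    using assms by (auto intro: refl_onI simp: rho_isomorphic_def)
  show "sym {(N, M). N \<in> S \<and> M \<in> S \<and> rho_isomorphic \<rho> D N M}"
    by (auto intro: symI rho_isomorphic_sym)
  show "trans {(N, M). N \<in> S \<and> M \<in> S \<and> rho_isomorphic \<rho> D N M}"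
    by (auto intro: transI rho_isomorphic_trans)
qed

theorem proposition5:
  fixes \<rho> :: "real \<Rightarrow> real" and Vin :: "'v set" and D :: nat
  assumes "nonlinearity \<rho>" and "finite Vin" and "Vin \<noteq> {}"
  shows "equiv (regular_GFNNs \<rho> Vin D)
           {(N, M). N \<in> regular_GFNNs \<rho> Vin D \<and> M \<in> regular_GFNNs \<rho> Vin D \<and>
                    rho_isomorphic \<rho> D N M} \<and>
         equiv (regular_LFNNs \<rho> Vin D)
           {(N, M). N \<in> regular_LFNNs \<rho> Vin D \<and> M \<in> regular_LFNNs \<rho> Vin D \<and>
                    rho_isomorphic \<rho> D N M} \<and>
         (\<forall>N M. N \<in> regular_GFNNs \<rho> Vin D \<and> M \<in> regular_GFNNs \<rho> Vin D \<and>
               rho_isomorphic \<rho> D N M \<longrightarrow>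
               (\<forall>t. \<forall>r<D. realization \<rho> N t r = realization \<rho> M t r))"
proof (intro conjI)
  show "equiv (regular_GFNNs \<rho> Vin D)
          {(N, M). N \<in> regular_GFNNs \<rho> Vin D \<and> M \<in> regular_GFNNs \<rho> Vin D \<and>
                   rho_isomorphic \<rho> D N M}"
    by (rule equiv_rho_isomorphic) (simp add: regular_GFNNs_def)
  show "equiv (regular_LFNNs \<rho> Vin D)
          {(N, M). N \<in> regular_LFNNs \<rho> Vin D \<and> M \<in> regular_LFNNs \<rho> Vin D \<and>
                   rho_isomorphic \<rho> D N M}"
    by (rule equiv_rho_isomorphic) (simp add: regular_LFNNs_def)
qed (use rho_isomorphic_realization in blast)

end
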